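(* Let $X$ be a real Banach space with the almost Daugavet property. Then every convex combination of $w^*$-slices in $B_{X^*}$ has diameter $2$.
   Context: For a subspace $Y\subseteq X^*$, $X$ has the Daugavet property with respect to $Y$ if $\|I+T\|=1+\|T\|$ for every rank-one operator $T=x\otimes y^*:X\to X$ (i.e. $T(z)=y^*(z)x$) with $x\in X$ and $y^*\in Y$. A subspace $Y\subseteq X^*$ is norming if $\|x\|=\sup\{|y^*(x)|: y^*\in Y,\|y^*\|\le1\}$ for all $x\in X$. $X$ has the almost Daugavet property if it has the Daugavet property with respect to some norming subspace of $X^*$. A $w^*$-slice of $B_{X^*}$ is $S(B_{X^*},x,\alpha)=\{f\in B_{X^*}:f(x)>1-\alpha\}$ with $x\in S_X$, $0<\alpha<1$; a convex combination of $w^*$-slices is a Minkowski sum $\sum_{i=1}^n\lambda_iS_i$ of $w^*$-slices $S_i$ with $\lambda_i>0$, $\sum_i\lambda_i=1$. *)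

theory Defs
  imports "HOL-Analysis.Analysis"
begin


definition daugavet_wrt :: "('a::real_normed_vector \<Rightarrow>\<^sub>L real) set \<Rightarrow> bool" where
  "daugavet_wrt Y \<longleftrightarrow>
     (\<forall>x::'a. \<forall>y\<in>Y.
        onorm (\<lambda>z. z + blinfun_apply y z *\<^sub>R x) = 1 + onorm (\<lambda>z. blinfun_apply y z *\<^sub>R x))"

definition norming :: "('a::real_normed_vector \<Rightarrow>\<^sub>L real) set \<Rightarrow> bool" where
  "norming Y \<longleftrightarrow>
     (\<forall>x::'a. norm x = (SUP y\<in>{y\<in>Y. norm y \<le> 1}. \<bar>blinfun_apply y x\<bar>))"

definition almost_daugavet :: "'a::real_normed_vector itself \<Rightarrow> bool" where
  "almost_daugavet TYPE('a) \<longleftrightarrow>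
     (\<exists>Y::('a \<Rightarrow>\<^sub>L real) set. subspace Y \<and> norming Y \<and> daugavet_wrt Y)"

definition wstar_slice :: "'a::real_normed_vector \<Rightarrow> real \<Rightarrow> ('a \<Rightarrow>\<^sub>L real) set" where
  "wstar_slice x \<alpha> = {f. norm f \<le> 1 \<and> blinfun_apply f x > 1 - \<alpha>}"

end

theory Submission
  imports Defs
begin

text \<open>
  A norming subspace \<open>Y\<close> with the Daugavet property lets one find, for unit vectors
  \<open>u\<^sub>1, \<dots>, u\<^sub>m\<close>, functionals \<open>y\<^sub>j \<in> Y\<close> lying in the slices \<open>S(u\<^sub>j, \<epsilon>)\<close> that are all almost
  maximal at one common point \<open>z\<close> of the unit ball. The functionals are added one at a time:
  the Daugavet equation for the normalised sum \<open>F\<close> of the previous ones and the new vector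
  \<open>u\<close> gives a point \<open>z\<close> with \<open>F z \<approx> \<parallel>F\<parallel>\<close> and \<open>\<parallel>u + z\<parallel> \<approx> 2\<close>, and a functional of \<open>Y\<close> norming
  \<open>u + z\<close> is then almost \<open>1\<close> at both \<open>u\<close> and \<open>z\<close>.
  Applying this to the vectors \<open>x\<^sub>i\<close> and \<open>-x\<^sub>i\<close> yields \<open>g\<^sub>i, h\<^sub>i\<close> in the \<open>i\<close>-th slice with
  \<open>(g\<^sub>i - h\<^sub>i)(z) \<approx> 2\<close>, so the convex combinations \<open>\<Sum> \<lambda>\<^sub>i g\<^sub>i\<close> and \<open>\<Sum> \<lambda>\<^sub>i h\<^sub>i\<close> are almost \<open>2\<close> apart.
\<close>

lemma abs_blinfun_apply_le_norm:
  fixes f :: "'a::real_normed_vector \<Rightarrow>\<^sub>L real"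
  assumes "norm w \<le> 1"
  shows "\<bar>blinfun_apply f w\<bar> \<le> norm f"
proof -
  have "\<bar>blinfun_apply f w\<bar> \<le> norm f * norm w" using norm_blinfun[of f w] by simp
  also have "\<dots> \<le> norm f" using assms by (simp add: mult_left_le)
  finally show ?thesis .
qed

lemma norm_convex_combination_le_1:
  fixes g :: "nat \<Rightarrow> 'a::real_normed_vector"
  assumes "\<forall>i<n. 0 \<le> lam i" "\<forall>i<n. norm (g i) \<le> 1" and "(\<Sum>i<n. lam i) = 1"
  shows "norm (\<Sum>i<n. lam i *\<^sub>R g i) \<le> 1"
proof -
  have "norm (\<Sum>i<n. lam i *\<^sub>R g i) \<le> (\<Sum>i<n. norm (lam i *\<^sub>R g i))" by (rule norm_sum)
  also have "\<dots> \<le> (\<Sum>i<n. lam i)"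
    using assms(1,2) by (intro sum_mono) (simp add: mult_left_le)
  finally show ?thesis using assms(3) by simp
qed

lemma diameter_le_of_subset_cball:
  fixes S :: "'a::real_normed_vector set"
  assumes "S \<subseteq> cball a r" and "0 \<le> r"
  shows "diameter S \<le> 2 * r"
proof (rule diameter_le)
  fix x y
  assume "x \<in> S" "y \<in> S"
  then have "dist a x \<le> r" "dist a y \<le> r" using assms(1) by auto
  then show "norm (x - y) \<le> 2 * r"
    using dist_triangle[of x y a] by (simp add: dist_norm norm_minus_commute)
qed (use assms(2) in simp)

lemma norm_sum_le_of_norm_le_1:
  fixes f :: "nat \<Rightarrow> 'a::real_normed_vector"
  assumes "\<forall>j<m. norm (f j) \<le> 1"
  shows "norm (\<Sum>j<m. f j) \<le> real m"
  using norm_sum[of f "{..<m}"] sum_bounded_above[of "{..<m}" "\<lambda>j. norm (f j)" 1] assms by simp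

lemma member_gt_of_sum_gt_card:
  fixes f :: "'b \<Rightarrow> real"
  assumes "finite A" "j \<in> A" "\<forall>k\<in>A. f k \<le> 1" "sum f A > real (card A) - e"
  shows "f j > 1 - e"
proof -
  have "card A > 0" using assms(1,2) card_gt_0_iff by blast
  then have card: "real (card (A - {j})) = real (card A) - 1"
    using assms(1,2) by (simp add: of_nat_diff)
  have "sum f (A - {j}) \<le> real (card (A - {j}))"
    using assms(3) sum_bounded_above[of "A - {j}" f 1] by simp
  moreover have "sum f A = f j + sum f (A - {j})"
    using assms(1,2) by (rule sum.remove)
  ultimately show ?thesis using card assms(4) by linarith
qed

lemma onorm_approximated:
  assumes "bounded_linear f" and "c < onorm f"
  obtains x where "norm x \<le> 1" and "norm (f x) > c"
proof -
  interpret f: bounded_linear f by fact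
  have "\<exists>x. norm x \<le> 1 \<and> norm (f x) > c"
  proof (rule ccontr)
    assume "\<not> ?thesis"
    then have le: "norm (f x) \<le> c" if "norm x \<le> 1" for x
      using that by (meson not_le)
    have "norm (f x) \<le> c * norm x" for x
    proof (cases "x = 0")
      case False
      have "f ((1 / norm x) *\<^sub>R x) = (1 / norm x) *\<^sub>R f x" by (rule f.scale)
      with le[of "(1 / norm x) *\<^sub>R x"] False show ?thesis
        by (simp add: divide_le_eq mult.commute)
    qed (use le[of 0] in simp)
    then have "onorm f \<le> c" using le[of 0] by (intro onorm_bound) (simp_all add: f.zero)
    then show False using assms(2) by simp
  qed
  then show ?thesis using that by blast
qed

lemma wstar_slice_mono:
  assumes "\<alpha> \<le> \<beta>"
  shows "wstar_slice x \<alpha> \<subseteq> wstar_slice x \<beta>"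
  using assms by (auto simp: wstar_slice_def)

lemma uminus_mem_wstar_slice:
  assumes "f \<in> wstar_slice (- x) \<alpha>"
  shows "- f \<in> wstar_slice x \<alpha>"
  using assms by (simp add: wstar_slice_def blinfun.minus_left blinfun.minus_right)

lemma convex_combination_wstar_slices_subset_cball:
  fixes x :: "nat \<Rightarrow> 'a::real_normed_vector" and n :: nat
  assumes "\<forall>i<n. 0 \<le> lam i" and "(\<Sum>i<n. lam i) = 1"
  shows "{\<Sum>i<n. lam i *\<^sub>R g i | g. \<forall>i<n. g i \<in> wstar_slice (x i) (\<alpha> i)} \<subseteq> cball 0 1"
proof
  fix a
  assume "a \<in> {\<Sum>i<n. lam i *\<^sub>R g i | g. \<forall>i<n. g i \<in> wstar_slice (x i) (\<alpha> i)}"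
  then obtain g where "a = (\<Sum>i<n. lam i *\<^sub>R g i)" "\<forall>i<n. norm (g i) \<le> 1"
    by (auto simp: wstar_slice_def)
  then show "a \<in> cball 0 1" using norm_convex_combination_le_1[of n lam g] assms by simp
qed

lemma norming_exists_functional:
  fixes Y :: "('a::real_normed_vector \<Rightarrow>\<^sub>L real) set"
  assumes "norming Y" "subspace Y" "c < norm u"
  obtains y where "y \<in> Y" "norm y \<le> 1" "blinfun_apply y u > c"
proof -
  let ?B = "{y\<in>Y. norm y \<le> 1}"
  have nonempty: "?B \<noteq> {}" using assms(2) subspace_0 by fastforce
  have "\<bar>blinfun_apply y u\<bar> \<le> norm u" if "y \<in> ?B" for y
  proof -
    have "\<bar>blinfun_apply y u\<bar> \<le> norm y * norm u" using norm_blinfun[of y u] by simp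
    also have "\<dots> \<le> norm u" using that by (simp add: mult_left_le_one_le)
    finally show ?thesis .
  qed
  then have bdd: "bdd_above ((\<lambda>y. \<bar>blinfun_apply y u\<bar>) ` ?B)"
    by (intro bdd_aboveI[of _ "norm u"]) auto
  have "c < (SUP y\<in>?B. \<bar>blinfun_apply y u\<bar>)"
    using assms(1,3) unfolding norming_def by metis
  then obtain y where y: "y \<in> ?B" "c < \<bar>blinfun_apply y u\<bar>"
    using less_cSUP_iff[OF nonempty bdd] by blast
  show ?thesis
  proof (cases "blinfun_apply y u \<ge> 0")
    case True
    then show ?thesis using y that by auto
  next
    case False
    then show ?thesis
      using y that[of "- y"] assms(2) by (simp add: subspace_neg blinfun.minus_left)
  qed
qed

lemma daugavet_wrt_exists_point:
  fixes Y :: "('a::real_normed_vector \<Rightarrow>\<^sub>L real) set"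
  assumes "daugavet_wrt Y" "y \<in> Y" "norm y = 1" "norm u = 1" "e > 0"
  obtains z where "norm z \<le> 1" "blinfun_apply y z > 1 - e" "norm (u + z) > 2 - e"
proof -
  define T where "T z = z + blinfun_apply y z *\<^sub>R u" for z
  have "onorm (\<lambda>z. blinfun_apply y z *\<^sub>R u) = 1"
    using onorm_scaleR_left[OF blinfun.bounded_linear_right, of y u] assms(3,4)
    by (simp add: norm_blinfun.rep_eq)
  then have "onorm T = 2" using assms(1,2) unfolding daugavet_wrt_def T_def by simp
  moreover have "bounded_linear T" unfolding T_def
    by (intro bounded_linear_add bounded_linear_ident bounded_linear_scaleR_const
        blinfun.bounded_linear_right)
  ultimately obtain w where w: "norm w \<le> 1" "norm (T w) > 2 - e/2"
    using onorm_approximated[of T "2 - e/2"] assms(5) by auto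
  have "norm (T w) \<le> norm w + \<bar>blinfun_apply y w\<bar>"
    using norm_triangle_ineq[of w "blinfun_apply y w *\<^sub>R u"] assms(4) by (simp add: T_def)
  then have abs_yw: "\<bar>blinfun_apply y w\<bar> > 1 - e/2" using w by linarith
  obtain v where v: "norm v \<le> 1" "blinfun_apply y v > 1 - e/2" "norm (T v) > 2 - e/2"
  proof (cases "blinfun_apply y w \<ge> 0")
    case True
    then show ?thesis using that w abs_yw by auto
  next
    case False
    have "T (- w) = - T w" by (simp add: T_def blinfun.minus_right)
    then show ?thesis using that[of "- w"] w abs_yw False by (simp add: blinfun.minus_right)
  qed
  have "blinfun_apply y v \<le> 1" using abs_blinfun_apply_le_norm[OF v(1), of y] assms(3) by simp
  have "T v = (u + v) - (1 - blinfun_apply y v) *\<^sub>R u" by (simp add: T_def algebra_simps)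
  then have "norm (T v) \<le> norm (u + v) + (1 - blinfun_apply y v)"
    using norm_triangle_ineq4[of "u + v" "(1 - blinfun_apply y v) *\<^sub>R u"] assms(4)
      \<open>blinfun_apply y v \<le> 1\<close> by simp
  then have "norm (u + v) > 2 - e" using v(2,3) by linarith
  moreover have "blinfun_apply y v > 1 - e" using v(2) assms(5) by linarith
  ultimately show ?thesis using that v(1) by blast
qed

lemma daugavet_norming_exists_common_point:
  fixes Y :: "('a::real_normed_vector \<Rightarrow>\<^sub>L real) set"
  assumes "daugavet_wrt Y" "norming Y" "subspace Y" "F \<in> Y" "norm u = 1" "\<delta> > 0"
  obtains z y where "norm z \<le> 1" "blinfun_apply F z \<ge> norm F * (1 - \<delta>)"
    "y \<in> Y \<inter> wstar_slice u \<delta>" "blinfun_apply y z > 1 - \<delta>"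
proof (cases "F = 0")
  case True
  obtain y where "y \<in> Y" "norm y \<le> 1" "blinfun_apply y u > 1 - \<delta>"
    using norming_exists_functional[OF assms(2,3), of "1 - \<delta>" u] assms(5,6) by auto
  then show ?thesis using that[of u y] True assms(5) by (simp add: wstar_slice_def)
next
  case False
  define G where "G = (1 / norm F) *\<^sub>R F"
  have "G \<in> Y" using assms(3,4) by (simp add: G_def subspace_scale)
  moreover have "norm G = 1" using False by (simp add: G_def)
  ultimately obtain z where z: "norm z \<le> 1" "blinfun_apply G z > 1 - \<delta>" "norm (u + z) > 2 - \<delta>"
    using daugavet_wrt_exists_point[OF assms(1)] assms(5,6) by metis
  obtain y where y: "y \<in> Y" "norm y \<le> 1" "blinfun_apply y (u + z) > 2 - \<delta>"
    using norming_exists_functional[OF assms(2,3) z(3)] by metis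
  have "blinfun_apply y u \<le> 1"
    using abs_blinfun_apply_le_norm[of u y] y(2) assms(5) by simp
  moreover have "blinfun_apply y z \<le> 1"
    using abs_blinfun_apply_le_norm[OF z(1), of y] y(2) by simp
  ultimately have y_near_1: "blinfun_apply y u > 1 - \<delta>" "blinfun_apply y z > 1 - \<delta>"
    using y(3) by (simp_all add: blinfun.add_right)
  have "blinfun_apply F z = norm F * blinfun_apply G z"
    using False by (simp add: G_def blinfun.scaleR_left)
  then have "blinfun_apply F z \<ge> norm F * (1 - \<delta>)"
    using z(2) by (simp add: mult_left_mono)
  then show ?thesis using that z(1) y y_near_1 by (simp add: wstar_slice_def)
qed

lemma daugavet_norming_exists_sum_near:
  fixes Y :: "('a::real_normed_vector \<Rightarrow>\<^sub>L real) set" and u :: "nat \<Rightarrow> 'a"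
  assumes D: "daugavet_wrt Y" and N: "norming Y" and S: "subspace Y"
    and "\<forall>j<m. norm (u j) = 1" and "e > 0"
  shows "\<exists>ys z. norm z \<le> 1 \<and> (\<forall>j<m. ys j \<in> Y \<inter> wstar_slice (u j) e)
           \<and> (\<Sum>j<m. blinfun_apply (ys j) z) > real m - e"
  using assms(4,5)
proof (induction m arbitrary: e)
  case 0
  then show ?case by (intro exI[of _ "\<lambda>_. 0"] exI[of _ 0]) auto
next
  case (Suc m)
  obtain ys z0 where z0: "norm z0 \<le> 1" and ys: "\<forall>j<m. ys j \<in> Y \<inter> wstar_slice (u j) (e/2)"
    and sum_z0: "(\<Sum>j<m. blinfun_apply (ys j) z0) > real m - e/2"
    using Suc.IH[of "e/2"] Suc.prems by auto
  define F where "F = (\<Sum>j<m. ys j)"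
  have F_apply: "blinfun_apply F w = (\<Sum>j<m. blinfun_apply (ys j) w)" for w
    by (simp add: F_def blinfun.sum_left)
  have "norm F \<le> real m"
    unfolding F_def using ys by (intro norm_sum_le_of_norm_le_1) (simp add: wstar_slice_def)
  have "norm F > real m - e/2"
    using abs_blinfun_apply_le_norm[OF z0, of F] sum_z0 F_apply by auto
  have "F \<in> Y" using ys S by (auto simp: F_def intro: subspace_sum)
  \<comment> \<open>the loss \<open>\<delta>\<close> is incurred by each of the \<open>m + 1\<close> functionals\<close>
  define \<delta> where "\<delta> = e / (2 * (real m + 1))"
  have \<delta>: "\<delta> > 0" "(real m + 1) * \<delta> = e/2" using Suc.prems(2) by (simp_all add: \<delta>_def field_simps)
  obtain z y where z: "norm z \<le> 1" "blinfun_apply F z \<ge> norm F * (1 - \<delta>)"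
    and y: "y \<in> Y \<inter> wstar_slice (u m) \<delta>" "blinfun_apply y z > 1 - \<delta>"
    using daugavet_norming_exists_common_point[OF D N S \<open>F \<in> Y\<close>, of "u m" \<delta>] Suc.prems(1) \<delta>(1)
    by auto
  have "norm F * \<delta> \<le> real m * \<delta>" using \<open>norm F \<le> real m\<close> \<delta>(1) by simp
  then have F_z: "blinfun_apply F z > real m - e/2 - real m * \<delta>"
    using z(2) \<open>norm F > real m - e/2\<close> by (simp add: algebra_simps)
  define ys' where "ys' = ys(m := y)"
  have "(\<Sum>j<Suc m. blinfun_apply (ys' j) z) = blinfun_apply F z + blinfun_apply y z"
    by (simp add: ys'_def F_apply)
  then have sum_z: "(\<Sum>j<Suc m. blinfun_apply (ys' j) z) > real (Suc m) - e"
    using F_z y(2) \<delta>(2) by (simp add: algebra_simps)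
  have "\<delta> \<le> (real m + 1) * \<delta>" using \<delta>(1) by simp
  then have "\<delta> \<le> e" using \<delta>(2) Suc.prems(2) by linarith
  then have "\<forall>j<Suc m. ys' j \<in> Y \<inter> wstar_slice (u j) e"
    using ys y(1) wstar_slice_mono[of "e/2" e] wstar_slice_mono[of \<delta> e] Suc.prems(2)
    by (fastforce simp: ys'_def less_Suc_eq)
  then show ?case using sum_z z(1) by blast
qed

lemma almost_daugavet_exists_common_point:
  fixes u :: "nat \<Rightarrow> 'a::real_normed_vector"
  assumes "almost_daugavet TYPE('a)" "\<forall>j<m. norm (u j) = 1" "e > 0"
  obtains ys z where "norm z \<le> 1"
    "\<forall>j<m. ys j \<in> wstar_slice (u j) e \<and> blinfun_apply (ys j) z > 1 - e"
proof -
  obtain Y :: "('a \<Rightarrow>\<^sub>L real) set" where "subspace Y" "norming Y" "daugavet_wrt Y"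
    using assms(1) unfolding almost_daugavet_def by blast
  then obtain ys z where z: "norm z \<le> 1" and ys: "\<forall>j<m. ys j \<in> wstar_slice (u j) e"
    and sum: "(\<Sum>j<m. blinfun_apply (ys j) z) > real m - e"
    using daugavet_norming_exists_sum_near[of Y m u e] assms(2,3) by blast
  have "blinfun_apply (ys j) z \<le> 1" if "j < m" for j
    using ys that abs_blinfun_apply_le_norm[OF z, of "ys j"] by (auto simp: wstar_slice_def)
  then have "blinfun_apply (ys j) z > 1 - e" if "j < m" for j
    using member_gt_of_sum_gt_card[of "{..<m}" j "\<lambda>j. blinfun_apply (ys j) z" e] that sum
    by simp
  then show ?thesis using that z ys by blast
qed

lemma almost_daugavet_convex_combination_slices_far:
  fixes x :: "nat \<Rightarrow> 'a::real_normed_vector"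
  assumes "almost_daugavet TYPE('a)" "\<forall>i<n. norm (x i) = 1 \<and> 0 < \<alpha> i \<and> 0 \<le> lam i"
    and "(\<Sum>i<n. lam i) = 1" and "\<epsilon> > 0"
  obtains g h where "\<forall>i<n. g i \<in> wstar_slice (x i) (\<alpha> i) \<and> h i \<in> wstar_slice (x i) (\<alpha> i)"
    and "norm ((\<Sum>i<n. lam i *\<^sub>R g i) - (\<Sum>i<n. lam i *\<^sub>R h i)) \<ge> 2 - \<epsilon>"
proof -
  define e where "e = Min (insert (\<epsilon>/2) (\<alpha> ` {..<n}))"
  have "e > 0" using assms(2,4) by (auto simp: e_def)
  have "e \<le> \<epsilon>/2" unfolding e_def by (rule Min_le) auto
  have e_le_\<alpha>: "e \<le> \<alpha> i" if "i < n" for i using that by (simp add: e_def)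
  define u where "u j = (if j < n then x j else - x (j - n))" for j
  have "\<forall>j<n + n. norm (u j) = 1" using assms(2) by (simp add: u_def)
  then obtain ys z where z: "norm z \<le> 1"
    and ys: "\<forall>j<n + n. ys j \<in> wstar_slice (u j) e \<and> blinfun_apply (ys j) z > 1 - e"
    using almost_daugavet_exists_common_point[OF assms(1) _ \<open>e > 0\<close>] by blast
  define g where "g i = ys i" for i
  define h where "h i = - ys (n + i)" for i
  have slices: "g i \<in> wstar_slice (x i) (\<alpha> i) \<and> h i \<in> wstar_slice (x i) (\<alpha> i)" if "i < n" for i
    using ys[rule_format, of i] ys[rule_format, of "n + i"] that
      wstar_slice_mono[OF e_le_\<alpha>[OF that]] uminus_mem_wstar_slice[of "ys (n + i)" "x i" e]
    by (auto simp: g_def h_def u_def)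
  let ?d = "(\<Sum>i<n. lam i *\<^sub>R g i) - (\<Sum>i<n. lam i *\<^sub>R h i)"
  have "blinfun_apply ?d z = (\<Sum>i<n. lam i * (blinfun_apply (ys i) z + blinfun_apply (ys (n + i)) z))"
    by (simp add: g_def h_def blinfun.diff_left blinfun.sum_left blinfun.scaleR_left
        blinfun.minus_left blinfun.add_left sum_subtractf[symmetric] algebra_simps)
  also have "\<dots> \<ge> (\<Sum>i<n. lam i * (2 - 2 * e))"
  proof (intro sum_mono mult_left_mono)
    fix i
    assume "i \<in> {..<n}"
    then show "2 - 2 * e \<le> blinfun_apply (ys i) z + blinfun_apply (ys (n + i)) z" "0 \<le> lam i"
      using ys[rule_format, of i] ys[rule_format, of "n + i"] assms(2) by auto
  qed
  also have "(\<Sum>i<n. lam i * (2 - 2 * e)) = 2 - 2 * e"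
    using assms(3) by (simp add: sum_distrib_right[symmetric])
  finally have "norm ?d \<ge> 2 - \<epsilon>"
    using abs_blinfun_apply_le_norm[OF z, of ?d] \<open>e \<le> \<epsilon>/2\<close> by linarith
  then show ?thesis using that slices by blast
qed

theorem mainTheorem3:
  fixes x :: "nat \<Rightarrow> 'a::banach" and \<alpha> lam :: "nat \<Rightarrow> real" and n :: nat
  assumes "almost_daugavet TYPE('a)"
    and "n \<ge> 1"
    and "\<forall>i<n. norm (x i) = 1 \<and> 0 < \<alpha> i \<and> \<alpha> i < 1 \<and> 0 < lam i"
    and "(\<Sum>i<n. lam i) = 1"
  shows "diameter {\<Sum>i<n. lam i *\<^sub>R g i | g. \<forall>i<n. g i \<in> wstar_slice (x i) (\<alpha> i)} = 2"
proof -
  let ?A = "{\<Sum>i<n. lam i *\<^sub>R g i | g. \<forall>i<n. g i \<in> wstar_slice (x i) (\<alpha> i)}"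
  have hyps: "\<forall>i<n. norm (x i) = 1 \<and> 0 < \<alpha> i \<and> 0 \<le> lam i" using assms(3) by auto
  then have "?A \<subseteq> cball 0 1"
    using convex_combination_wstar_slices_subset_cball assms(4) by blast
  then have bounded: "bounded ?A" and "diameter ?A \<le> 2"
    using bounded_subset[OF bounded_cball] diameter_le_of_subset_cball[of ?A 0 1] by auto
  moreover have "2 \<le> diameter ?A"
  proof (rule field_le_epsilon)
    fix \<epsilon> :: real
    assume "0 < \<epsilon>"
    then obtain g h where "\<forall>i<n. g i \<in> wstar_slice (x i) (\<alpha> i) \<and> h i \<in> wstar_slice (x i) (\<alpha> i)"
      and far: "2 - \<epsilon> \<le> norm ((\<Sum>i<n. lam i *\<^sub>R g i) - (\<Sum>i<n. lam i *\<^sub>R h i))"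
      using almost_daugavet_convex_combination_slices_far[OF assms(1) hyps assms(4)] by blast
    then have "(\<Sum>i<n. lam i *\<^sub>R g i) \<in> ?A" "(\<Sum>i<n. lam i *\<^sub>R h i) \<in> ?A" by blast+
    then have "dist (\<Sum>i<n. lam i *\<^sub>R g i) (\<Sum>i<n. lam i *\<^sub>R h i) \<le> diameter ?A"
      by (rule diameter_bounded_bound[OF bounded])
    then show "2 \<le> diameter ?A + \<epsilon>" using far by (simp add: dist_norm)
  qed
  ultimately show ?thesis by simp
qed

end
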